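(* Let $m_{\bm{\lambda}}$ be the multiplicity of $S_{\bm{\lambda}}$ in the isotypic decomposition of the $\mathfrak{S}_n$-module $V=\mathbb{R}[\mathcal{V}_n]_{\le d}$. Then the number of partitions $\bm{\lambda}\vdash n$ with $m_{\bm{\lambda}}\ne0$ is at most $p(0)+p(1)+\cdots+p(2d)$, where $p(i)$ is the number of partitions of $i$. In particular, the size of $\Lambda=\{\bm{\lambda}\vdash n:\bm{\lambda}\geq_{\textup{lex}}(n-2d,1^{2d})\}$ is bounded by a quantity independent of $n$.
   Context: $\mathbb{R}[\mathsf{x}]$ is the polynomial ring in variables $\mathsf{x}_{ij}$, $1\le i<j\le n$; $\mathcal{V}_n=\{0,1\}^{\binom n2}$; $\mathbb{R}[\mathcal{V}_n]=\mathbb{R}[\mathsf{x}]/\mathcal{I}_n$ where $\mathcal{I}_n$ is generated by all $\mathsf{x}_{ij}^2-\mathsf{x}_{ij}$ (functions on $\mathcal{V}_n$, identified with square-free polynomials); $\mathbb{R}[\mathcal{V}_n]_{\le d}$ consists of the square-free polynomials of degree at most $d$. $\mathfrak{S}_n$ acts via $\mathfrak{s}\cdot\mathsf{x}_{ij}=\mathsf{x}_{\mathfrak{s}(i)\mathfrak{s}(j)}$ (with $\mathsf{x}_{ji}:=\mathsf{x}_{ij}$) extended to ring automorphisms. $S_{\bm{\lambda}}$ denotes the irreducible $\mathfrak{S}_n$-module indexed by $\bm{\lambda}\vdash n$. $\geq_{\textup{lex}}$ is lexicographic order on partitions and $(n-2d,1^{2d})$ is the hook partition with first part $n-2d$ followed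 by $2d$ ones. *)

theory Defs
  imports "HOL-Combinatorics.Combinatorics"
begin

definition partition_of :: "nat \<Rightarrow> nat list \<Rightarrow> bool" where
  "partition_of n lam \<longleftrightarrow> sorted_wrt (\<ge>) lam \<and> 0 \<notin> set lam \<and> sum_list lam = n"

definition num_partitions :: "nat \<Rightarrow> nat" where
  "num_partitions i = card {lam. partition_of i lam}"

definition lex_ge :: "nat list \<Rightarrow> nat list \<Rightarrow> bool" where
  "lex_ge lam mu \<longleftrightarrow> lam = mu \<or> (mu, lam) \<in> lexord {(a, b). a < b}"

definition hook :: "nat \<Rightarrow> nat \<Rightarrow> nat list" where
  "hook n d = (n - 2 * d) # replicate (2 * d) 1"

definition cells :: "nat list \<Rightarrow> (nat \<times> nat) set" where
  "cells lam = {(i, j). i < length lam \<and> j < lam ! i}"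

definition tableau :: "nat \<Rightarrow> nat list \<Rightarrow> (nat \<times> nat \<Rightarrow> nat) \<Rightarrow> bool" where
  "tableau n lam T \<longleftrightarrow> bij_betw T (cells lam) {0..<n}"

text \<open>The tabloid {T}, encoded by the function sending each entry k < n to its row
  (two tableaux give the same tabloid iff their rows have the same contents).\<close>
definition tabloid :: "nat \<Rightarrow> nat list \<Rightarrow> (nat \<times> nat \<Rightarrow> nat) \<Rightarrow> (nat \<Rightarrow> nat)" where
  "tabloid n lam T = (\<lambda>k. if k < n then fst (the_inv_into (cells lam) T k) else 0)"

definition column_group :: "nat \<Rightarrow> nat list \<Rightarrow> (nat \<times> nat \<Rightarrow> nat) \<Rightarrow> (nat \<Rightarrow> nat) set" where
  "column_group n lam T = {\<pi>. \<pi> permutes {0..<n} \<and>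
      (\<forall>c \<in> cells lam. snd (the_inv_into (cells lam) T (\<pi> (T c))) = snd c)}"

definition polytabloid :: "nat \<Rightarrow> nat list \<Rightarrow> (nat \<times> nat \<Rightarrow> nat) \<Rightarrow> ((nat \<Rightarrow> nat) \<Rightarrow> real)" where
  "polytabloid n lam T = (\<lambda>t. \<Sum>\<pi> \<in> column_group n lam T.
      of_int (sign \<pi>) * (if t = tabloid n lam (\<pi> \<circ> T) then 1 else 0))"

definition specht :: "nat \<Rightarrow> nat list \<Rightarrow> ((nat \<Rightarrow> nat) \<Rightarrow> real) set" where
  "specht n lam = {f. \<exists>F c. finite F \<and> F \<subseteq> {polytabloid n lam T | T. tableau n lam T} \<and>
      f = (\<lambda>t. \<Sum>g\<in>F. c g * g t)}"

text \<open>Action of sigma on functions on tabloids: (sigma . f)(t) = f(t o sigma),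
  so that sigma . {T} = {sigma o T}.\<close>
definition act_tab :: "(nat \<Rightarrow> nat) \<Rightarrow> ((nat \<Rightarrow> nat) \<Rightarrow> real) \<Rightarrow> ((nat \<Rightarrow> nat) \<Rightarrow> real)" where
  "act_tab \<sigma> f = (\<lambda>t. f (t \<circ> \<sigma>))"

text \<open>Edges {i,j}, i<j<n; the variable x_ij is indexed by the edge {i,j}.\<close>
definition edges :: "nat \<Rightarrow> nat set set" where
  "edges n = {{i, j} | i j. i < j \<and> j < n}"

text \<open>A square-free polynomial is given by its coefficient function on square-free monomials
  prod_{e in E} x_e (E a set of edges). R[V_n]_{<=d}: square-free polynomials of degree <= d.\<close>
definition Vd :: "nat \<Rightarrow> nat \<Rightarrow> (nat set set \<Rightarrow> real) set" where
  "Vd n d = {c. \<forall>E. c E \<noteq> 0 \<longrightarrow> E \<subseteq> edges n \<and> card E \<le> d}"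

text \<open>sigma . x_ij = x_{sigma i, sigma j}: the monomial x^E is sent to x^{sigma(E)}.\<close>
definition act_poly :: "(nat \<Rightarrow> nat) \<Rightarrow> (nat set set \<Rightarrow> real) \<Rightarrow> (nat set set \<Rightarrow> real)" where
  "act_poly \<sigma> c = (\<lambda>E. c ((\<lambda>e. inv \<sigma> ` e) ` E))"

definition equiv_hom :: "nat \<Rightarrow> nat \<Rightarrow> nat list \<Rightarrow>
    (((nat \<Rightarrow> nat) \<Rightarrow> real) \<Rightarrow> (nat set set \<Rightarrow> real)) \<Rightarrow> bool" where
  "equiv_hom n d lam \<phi> \<longleftrightarrow>
     (\<forall>f \<in> specht n lam. \<phi> f \<in> Vd n d) \<and>
     (\<forall>f \<in> specht n lam. \<forall>g \<in> specht n lam. \<phi> (\<lambda>t. f t + g t) = (\<lambda>E. \<phi> f E + \<phi> g E)) \<and>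
     (\<forall>f \<in> specht n lam. \<forall>a::real. \<phi> (\<lambda>t. a * f t) = (\<lambda>E. a * \<phi> f E)) \<and>
     (\<forall>\<sigma>. \<sigma> permutes {0..<n} \<longrightarrow>
        (\<forall>f \<in> specht n lam. \<phi> (act_tab \<sigma> f) = act_poly \<sigma> (\<phi> f)))"

definition lin_indep_on :: "((nat \<Rightarrow> nat) \<Rightarrow> real) set \<Rightarrow>
    (((nat \<Rightarrow> nat) \<Rightarrow> real) \<Rightarrow> (nat set set \<Rightarrow> real)) set \<Rightarrow> bool" where
  "lin_indep_on S F \<longleftrightarrow> (\<forall>c. (\<forall>f \<in> S. \<forall>E. (\<Sum>\<phi>\<in>F. c \<phi> * \<phi> f E) = 0) \<longrightarrow> (\<forall>\<phi>\<in>F. c \<phi> = 0))"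

text \<open>m_lam = dim Hom_{S_n}(S_lam, V), the multiplicity of S_lam in V
  (S_lam is absolutely irreducible, so End(S_lam) = R).\<close>
definition specht_mult :: "nat \<Rightarrow> nat \<Rightarrow> nat list \<Rightarrow> nat" where
  "specht_mult n d lam = (GREATEST k. \<exists>F. finite F \<and> card F = k \<and>
      (\<forall>\<phi>\<in>F. equiv_hom n d lam \<phi>) \<and> lin_indep_on (specht n lam) F)"

end

theory Submission
  imports Defs
begin

text \<open>
  Suppose the first row of \<open>\<lambda>\<close> is shorter than \<open>n - 2d\<close>. The edges of a monomial \<open>x\<^sup>E\<close>
  with \<open>|E| \<le> d\<close> touch at most \<open>2d\<close> vertices, so more than \<open>\<lambda>\<^sub>1\<close> vertices are untouched
  and two of them, \<open>u\<close> and \<open>v\<close>, lie in a common column of any tableau \<open>T\<close>. The transposition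
  \<open>(u v)\<close> negates the polytabloid \<open>e\<^sub>T\<close> but fixes \<open>x\<^sup>E\<close>, so for an equivariant
  \<open>\<phi> : S\<^sub>\<lambda> \<rightarrow> V\<close> the coefficient of \<open>x\<^sup>E\<close> in \<open>\<phi>(e\<^sub>T)\<close> equals its own negative.
  Hence \<open>\<phi> = 0\<close> and \<open>m\<^sub>\<lambda> = 0\<close>. The remaining partitions have \<open>\<lambda>\<^sub>1 \<ge> n - 2d\<close>, and such a
  partition is determined by its tail \<open>(\<lambda>\<^sub>2, \<lambda>\<^sub>3, \<dots>)\<close>, a partition of some \<open>i \<le> 2d\<close>.
  Partitions lexicographically above the hook \<open>(n - 2d, 1\<^sup>2\<^sup>d)\<close> have \<open>\<lambda>\<^sub>1 \<ge> n - 2d\<close> as well.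
\<close>

abbreviation column_of :: "nat list \<Rightarrow> (nat \<times> nat \<Rightarrow> nat) \<Rightarrow> nat \<Rightarrow> nat" where
  "column_of lam T k \<equiv> snd (the_inv_into (cells lam) T k)"

lemma tableau_comp:
  assumes "tableau n lam T" and "\<sigma> permutes {0..<n}"
  shows "tableau n lam (\<sigma> \<circ> T)"
  using assms unfolding tableau_def by (meson bij_betw_trans permutes_imp_bij)

lemma tabloid_comp:
  assumes T: "tableau n lam T" and \<sigma>: "\<sigma> permutes {0..<n}"
  shows "tabloid n lam (\<sigma> \<circ> T) = tabloid n lam T \<circ> inv \<sigma>"
proof
  fix k
  show "tabloid n lam (\<sigma> \<circ> T) k = (tabloid n lam T \<circ> inv \<sigma>) k"
  proof (cases "k < n")
    case True
    have bij: "bij_betw T (cells lam) {0..<n}" using T unfolding tableau_def .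
    have k': "inv \<sigma> k \<in> {0..<n}"
      using True \<sigma> by (metis atLeastLessThan_iff permutes_inv permutes_in_image zero_le)
    define c where "c = the_inv_into (cells lam) T (inv \<sigma> k)"
    have c: "c \<in> cells lam" "T c = inv \<sigma> k"
      using bij k' unfolding c_def by (auto simp: bij_betw_def the_inv_into_into f_the_inv_into_f)
    have "inj_on (\<sigma> \<circ> T) (cells lam)"
      using bij \<sigma> by (metis bij_betw_def comp_inj_on permutes_inj inj_on_subset subset_UNIV)
    moreover have "(\<sigma> \<circ> T) c = k" using c \<sigma> by (simp add: permutes_inverses(1))
    ultimately have "the_inv_into (cells lam) (\<sigma> \<circ> T) k = c"
      using c(1) by (metis the_inv_into_f_eq)
    then show ?thesis using True k' unfolding tabloid_def c_def by simp
  next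
    case False
    then have "inv \<sigma> k = k" using \<sigma> by (metis atLeastLessThan_iff permutes_inv permutes_not_in)
    then show ?thesis using False unfolding tabloid_def by simp
  qed
qed

lemma comp_eq_tabloid_iff:
  assumes "tableau n lam T" and \<sigma>: "\<sigma> permutes {0..<n}"
  shows "t \<circ> \<sigma> = tabloid n lam T \<longleftrightarrow> t = tabloid n lam (\<sigma> \<circ> T)"
proof -
  have "t \<circ> \<sigma> = s \<longleftrightarrow> t = s \<circ> inv \<sigma>" for s :: "nat \<Rightarrow> nat"
    using permutes_inverses[OF \<sigma>] by (metis comp_apply fun_eq_iff)
  then show ?thesis using tabloid_comp[OF assms] by simp
qed

lemma act_tab_transpose_polytabloid:
  assumes T: "tableau n lam T" and uv: "u \<noteq> v" "u < n" "v < n"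
    and same_column: "column_of lam T u = column_of lam T v"
  shows "act_tab (transpose u v) (polytabloid n lam T) = (\<lambda>t. -1 * polytabloid n lam T t)"
proof
  fix t
  let ?\<tau> = "transpose u v" and ?C = "column_group n lam T"
  let ?e = "\<lambda>p. of_int (sign p) * (if t = tabloid n lam (p \<circ> T) then 1 else 0 :: real)"
  have \<tau>: "?\<tau> permutes {0..<n}" using uv by (simp add: permutes_swap_id)
  have "column_of lam T (?\<tau> k) = column_of lam T k" for k
    using same_column by (cases "k = u"; cases "k = v") auto
  then have \<tau>_C: "?\<tau> \<circ> p \<in> ?C" if "p \<in> ?C" for p
    using that \<tau> unfolding column_group_def by (auto intro: permutes_compose)
  have sign_\<tau>: "sign (?\<tau> \<circ> p) = - sign p" if "p \<in> ?C" for p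
  proof -
    have "permutation p" using that unfolding column_group_def by (auto intro: permutes_imp_permutation)
    then show ?thesis using uv by (simp add: sign_compose permutation_swap_id sign_swap_id)
  qed
  have "act_tab ?\<tau> (polytabloid n lam T) t = (\<Sum>p\<in>?C. ?e (?\<tau> \<circ> p) * - 1)"
    unfolding act_tab_def polytabloid_def
  proof (intro sum.cong refl)
    fix p assume p: "p \<in> ?C"
    then have "p \<circ> T = ?\<tau> \<circ> (?\<tau> \<circ> p \<circ> T)" by (simp add: comp_assoc[symmetric])
    then have "t \<circ> ?\<tau> = tabloid n lam (p \<circ> T) \<longleftrightarrow> t = tabloid n lam (?\<tau> \<circ> p \<circ> T)"
      using comp_eq_tabloid_iff[OF tableau_comp[OF T] \<tau>] p
      unfolding column_group_def by (simp add: comp_assoc permutes_compose[OF _ \<tau>])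
    then show "of_int (sign p) * (if t \<circ> ?\<tau> = tabloid n lam (p \<circ> T) then 1 else 0) =
        ?e (?\<tau> \<circ> p) * - 1"
      using sign_\<tau>[OF p] by (simp add: comp_assoc)
  qed
  also have "\<dots> = - polytabloid n lam T t"
    unfolding polytabloid_def sum_negf[symmetric] mult_minus1_right
    by (rule sum.reindex_bij_witness[where i = "\<lambda>q. ?\<tau> \<circ> q" and j = "\<lambda>q. ?\<tau> \<circ> q"])
      (auto simp: \<tau>_C comp_assoc[symmetric])
  finally show "act_tab ?\<tau> (polytabloid n lam T) t = -1 * polytabloid n lam T t" by simp
qed

lemma specht_lincomb:
  assumes "finite F" and "F \<subseteq> {polytabloid n lam T | T. tableau n lam T}"
  shows "(\<lambda>t. \<Sum>g\<in>F. c g * g t) \<in> specht n lam"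
  using assms unfolding specht_def by blast

lemma polytabloid_in_specht: "tableau n lam T \<Longrightarrow> polytabloid n lam T \<in> specht n lam"
  using specht_lincomb[of "{polytabloid n lam T}" n lam "\<lambda>_. 1"] by auto

lemma equiv_hom_add:
  "equiv_hom n d lam \<phi> \<Longrightarrow> f \<in> specht n lam \<Longrightarrow> g \<in> specht n lam \<Longrightarrow>
    \<phi> (\<lambda>t. f t + g t) = (\<lambda>E. \<phi> f E + \<phi> g E)"
  unfolding equiv_hom_def by blast

lemma equiv_hom_scale:
  "equiv_hom n d lam \<phi> \<Longrightarrow> f \<in> specht n lam \<Longrightarrow> \<phi> (\<lambda>t. a * f t) = (\<lambda>E. a * \<phi> f E)"
  unfolding equiv_hom_def by blast

lemma equiv_hom_act:
  "equiv_hom n d lam \<phi> \<Longrightarrow> \<sigma> permutes {0..<n} \<Longrightarrow> f \<in> specht n lam \<Longrightarrow>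
    \<phi> (act_tab \<sigma> f) = act_poly \<sigma> (\<phi> f)"
  unfolding equiv_hom_def by blast

lemma equiv_hom_in_Vd: "equiv_hom n d lam \<phi> \<Longrightarrow> f \<in> specht n lam \<Longrightarrow> \<phi> f \<in> Vd n d"
  unfolding equiv_hom_def by blast

lemma equiv_hom_lincomb:
  assumes \<phi>: "equiv_hom n d lam \<phi>"
    and "finite F" and F: "F \<subseteq> {polytabloid n lam T | T. tableau n lam T}"
  shows "\<phi> (\<lambda>t. \<Sum>g\<in>F. c g * g t) = (\<lambda>E. \<Sum>g\<in>F. c g * \<phi> g E)"
  using \<open>finite F\<close> F
proof (induction F rule: finite_induct)
  case empty
  have "(\<lambda>t. 0) \<in> specht n lam" using specht_lincomb[of "{}"] by simp
  then show ?case using equiv_hom_scale[OF \<phi>, of "\<lambda>t. 0" 0] by simp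
next
  case (insert g F)
  then have g: "g \<in> specht n lam" and h: "(\<lambda>t. \<Sum>g\<in>F. c g * g t) \<in> specht n lam"
    using polytabloid_in_specht specht_lincomb[of F] by auto
  have "(\<lambda>t. c g * g t) \<in> specht n lam"
    using specht_lincomb[of "{g}" n lam c] insert.prems by auto
  then show ?case
    using insert equiv_hom_add[OF \<phi> _ h] equiv_hom_scale[OF \<phi> g] by simp
qed

lemma column_of_less_hd:
  assumes P: "partition_of n lam" and "tableau n lam T" and "k < n"
  shows "column_of lam T k < hd lam"
proof -
  have "the_inv_into (cells lam) T k \<in> cells lam"
    using assms(2,3) unfolding tableau_def by (auto simp: bij_betw_def the_inv_into_into)
  then obtain i j where ij: "the_inv_into (cells lam) T k = (i, j)" "i < length lam" "j < lam ! i"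
    unfolding cells_def by auto
  have "lam ! i \<le> lam ! 0"
    using P ij(2) unfolding partition_of_def by (cases i) (auto simp: sorted_wrt_iff_nth_less)
  then show ?thesis using ij by (cases lam) auto
qed

lemma obtain_same_column:
  assumes "partition_of n lam" and "tableau n lam T"
    and "U \<subseteq> {0..<n}" and "hd lam < card U"
  obtains u v where "u \<in> U" "v \<in> U" "u \<noteq> v" "column_of lam T u = column_of lam T v"
proof -
  have "column_of lam T ` U \<subseteq> {..<hd lam}"
    using assms column_of_less_hd by fastforce
  then have "card (column_of lam T ` U) < card U"
    using assms(4) by (metis card_lessThan card_mono finite_lessThan le_less_trans)
  then have "\<not> inj_on (column_of lam T) U" by (rule pigeonhole)
  then show ?thesis using that unfolding inj_on_def by blast
qed

lemma Union_edges_subset: "E \<subseteq> edges n \<Longrightarrow> \<Union>E \<subseteq> {0..<n}"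
  unfolding edges_def by auto

lemma card_Union_edges_le:
  assumes "E \<subseteq> edges n"
  shows "card (\<Union>E) \<le> 2 * card E"
proof -
  have "card e \<le> 2" if "e \<in> E" for e
    using that assms unfolding edges_def by (auto simp: card_insert_le_m1)
  then have "(\<Sum>e\<in>E. card e) \<le> 2 * card E"
    using sum_mono[of E card "\<lambda>_. 2"] by simp
  then show ?thesis using card_Union_le_sum_card[of E] by linarith
qed

lemma act_poly_transpose_fixes:
  assumes "u \<notin> \<Union>E" and "v \<notin> \<Union>E"
  shows "act_poly (transpose u v) c E = c E"
proof -
  have "inv (transpose u v) ` e = e" if "e \<in> E" for e
    using that assms by (force simp: inv_transpose_eq transpose_def)
  then show ?thesis unfolding act_poly_def by simp
qed

lemma equiv_hom_polytabloid_eq_0: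
  assumes P: "partition_of n lam" and short: "hd lam + 2 * d < n"
    and \<phi>: "equiv_hom n d lam \<phi>" and T: "tableau n lam T"
  shows "\<phi> (polytabloid n lam T) E = 0"
proof (cases "E \<subseteq> edges n \<and> card E \<le> d")
  case False
  then show ?thesis
    using equiv_hom_in_Vd[OF \<phi> polytabloid_in_specht[OF T]] unfolding Vd_def by blast
next
  case True
  let ?e = "polytabloid n lam T" and ?U = "{0..<n} - \<Union>E"
  have "card (\<Union>E) \<le> 2 * d" using card_Union_edges_le[of E n] True by linarith
  then have "hd lam < card ?U"
    using short card_Diff_subset[OF _ Union_edges_subset[of E n]] True
    by (simp add: finite_subset[OF Union_edges_subset[of E n]])
  then obtain u v where uv: "u \<in> ?U" "v \<in> ?U" "u \<noteq> v" "column_of lam T u = column_of lam T v"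
    using obtain_same_column[OF P T] by blast
  let ?\<tau> = "transpose u v"
  have \<tau>: "?\<tau> permutes {0..<n}" using uv by (simp add: permutes_swap_id)
  have e: "?e \<in> specht n lam" using T by (rule polytabloid_in_specht)
  have "- \<phi> ?e E = \<phi> (act_tab ?\<tau> ?e) E"
    using act_tab_transpose_polytabloid[OF T] uv equiv_hom_scale[OF \<phi> e, of "-1"] by simp
  also have "\<dots> = \<phi> ?e E"
    using equiv_hom_act[OF \<phi> \<tau> e] act_poly_transpose_fixes uv by simp
  finally show ?thesis by simp
qed

lemma equiv_hom_eq_0:
  assumes "partition_of n lam" and "hd lam + 2 * d < n"
    and \<phi>: "equiv_hom n d lam \<phi>" and "f \<in> specht n lam"
  shows "\<phi> f E = 0"
proof -
  obtain F c where F: "finite F" "F \<subseteq> {polytabloid n lam T | T. tableau n lam T}"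
    and f: "f = (\<lambda>t. \<Sum>g\<in>F. c g * g t)"
    using \<open>f \<in> specht n lam\<close> unfolding specht_def by blast
  then show ?thesis
    using equiv_hom_lincomb[OF \<phi> F] equiv_hom_polytabloid_eq_0[OF assms(1-3)]
    by (auto intro!: sum.neutral)
qed

lemma specht_mult_eq_0:
  assumes "partition_of n lam" and "hd lam + 2 * d < n"
  shows "specht_mult n d lam = 0"
  unfolding specht_mult_def
proof (rule Greatest_equality)
  show "\<exists>F. finite F \<and> card F = 0 \<and> (\<forall>\<phi>\<in>F. equiv_hom n d lam \<phi>) \<and> lin_indep_on (specht n lam) F"
    by (intro exI[of _ "{}"]) (simp add: lin_indep_on_def)
next
  fix k
  assume "\<exists>F. finite F \<and> card F = k \<and> (\<forall>\<phi>\<in>F. equiv_hom n d lam \<phi>) \<and> lin_indep_on (specht n lam) F"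
  then obtain F where F: "card F = k" "\<forall>\<phi>\<in>F. equiv_hom n d lam \<phi>" "lin_indep_on (specht n lam) F"
    by blast
  have "\<forall>f\<in>specht n lam. \<forall>E. (\<Sum>\<phi>\<in>F. 1 * \<phi> f E) = 0"
    using F(2) equiv_hom_eq_0[OF assms] by (auto intro!: sum.neutral)
  then have "F = {}" using F(3) unfolding lin_indep_on_def by fastforce
  then show "k \<le> 0" using F(1) by simp
qed

lemma length_le_sum_list: "0 \<notin> set xs \<Longrightarrow> length xs \<le> sum_list (xs :: nat list)"
  by (induction xs) (auto simp: Suc_le_eq)

lemma finite_partitions: "finite {lam. partition_of n lam}"
proof (rule finite_subset)
  show "{lam. partition_of n lam} \<subseteq> {xs. set xs \<subseteq> {0..n} \<and> length xs \<le> n}"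
    unfolding partition_of_def using length_le_sum_list member_le_sum_list by fastforce
  show "finite {xs. set xs \<subseteq> {0..n} \<and> length xs \<le> n}"
    by (rule finite_lists_length_le) simp
qed

lemma partition_of_tl: "partition_of n lam \<Longrightarrow> partition_of (n - hd lam) (tl lam)"
  by (cases lam) (auto simp: partition_of_def)

lemma inj_on_tl_partitions: "inj_on tl {lam. partition_of n lam}"
proof
  fix a b
  assume "a \<in> {lam. partition_of n lam}" "b \<in> {lam. partition_of n lam}" "tl a = tl b"
  then show "a = b" unfolding partition_of_def
    by (cases a; cases b) auto
qed

lemma card_partitions_hd_ge:
  "card {lam. partition_of n lam \<and> n \<le> hd lam + k} \<le> (\<Sum>i\<le>k. num_partitions i)"
proof -
  let ?A = "{lam. partition_of n lam \<and> n \<le> hd lam + k}"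
  have "tl ` ?A \<subseteq> (\<Union>i\<le>k. {lam. partition_of i lam})"
    using partition_of_tl by fastforce
  then have "card ?A \<le> card (\<Union>i\<le>k. {lam. partition_of i lam})"
    using inj_on_tl_partitions[of n] finite_partitions
    by (intro card_inj_on_le[of tl]) (auto intro: inj_on_subset)
  also have "\<dots> \<le> (\<Sum>i\<le>k. num_partitions i)"
    unfolding num_partitions_def by (rule card_UN_le) simp
  finally show ?thesis .
qed

lemma lex_ge_hook_imp_hd_ge:
  assumes "lex_ge lam (hook n d)"
  shows "n - 2 * d \<le> hd lam"
  using assms unfolding lex_ge_def lexord_def hook_def
  by (auto simp: Cons_eq_append_conv append_eq_Cons_conv)

theorem proposition2p7:
  fixes d :: nat
  shows "(\<forall>n::nat. card {lam. partition_of n lam \<and> specht_mult n d lam \<noteq> 0}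
            \<le> (\<Sum>i\<le>2 * d. num_partitions i))
       \<and> (\<exists>B::nat. \<forall>n::nat. card {lam. partition_of n lam \<and> lex_ge lam (hook n d)} \<le> B)"
proof -
  let ?B = "\<Sum>i\<le>2 * d. num_partitions i"
  have bound: "card {lam. partition_of n lam \<and> P lam} \<le> ?B"
    if "\<And>lam. partition_of n lam \<Longrightarrow> P lam \<Longrightarrow> n \<le> hd lam + 2 * d" for n P
  proof -
    have "card {lam. partition_of n lam \<and> P lam} \<le> card {lam. partition_of n lam \<and> n \<le> hd lam + 2 * d}"
      using that finite_partitions[of n] by (intro card_mono) (auto intro: finite_subset)
    then show ?thesis using card_partitions_hd_ge order_trans by blast
  qed
  have "card {lam. partition_of n lam \<and> specht_mult n d lam \<noteq> 0} \<le> ?B" for n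
    using specht_mult_eq_0 by (intro bound) (meson not_le)
  moreover have "card {lam. partition_of n lam \<and> lex_ge lam (hook n d)} \<le> ?B" for n
    using lex_ge_hook_imp_hd_ge by (intro bound) (meson le_diff_conv)
  ultimately show ?thesis by blast
qed

end
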